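(* Let $q\geqslant 67$ be a prime with $q\equiv 3 \pmod{16}$. Then $$N_q>\frac{2-\log(3\sqrt{2})}{2}\cdot\frac{\lfloor\sqrt{3q/4}\rfloor}{\log q}.$$
   Context: For a prime $q$, $N_q$ denotes the number of rational primes $p\leqslant q$ that split in the imaginary quadratic field $\mathbb{Q}(\sqrt{-q})$. *)

theory Defs
  imports Complex_Main "HOL-Number_Theory.Number_Theory"
begin

text \<open>Splitting of a rational prime p in the quadratic field Q(sqrt d), d squarefree, d \<noteq> 0,1.
  The ring of integers is Z[omega] with omega = (1 + sqrt d)/2 if d = 1 mod 4 and omega = sqrt d
  otherwise; by Dedekind--Kummer (applicable since Z[omega] is the full ring of integers),
  p splits iff the minimal polynomial of omega factors mod p into two distinct linear factors,
  i.e. has two roots that are distinct mod p.\<close>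

definition omega_minpoly :: "int \<Rightarrow> int \<Rightarrow> int" where
  "omega_minpoly d x = (if d mod 4 = 1 then x^2 - x + (1 - d) div 4 else x^2 - d)"

definition splits_in_quadratic_field :: "int \<Rightarrow> nat \<Rightarrow> bool" where
  "splits_in_quadratic_field d p \<longleftrightarrow> prime p \<and>
     (\<exists>x y :: int. \<not> [x = y] (mod int p) \<and>
        [omega_minpoly d x = 0] (mod int p) \<and> [omega_minpoly d y = 0] (mod int p))"

definition N :: "nat \<Rightarrow> nat" where
  "N q = card {p. prime p \<and> p \<le> q \<and> splits_in_quadratic_field (- int q) p}"

end

theory Submission
  imports Defs "HOL-Analysis.Harmonic_Numbers"
begin

text \<open>
  Put a = (q + 1)/4, so that x^2 - x + a is the minimal polynomial of (1 + sqrt(-q))/2, and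
  M = floor (sqrt (3q/4)). For 1 \<le> x \<le> M the values x(x - 1) + a = ((2x - 1)^2 + q)/4 lie
  below q, and a prime p dividing one of them does not divide 2x - 1 (else p would divide q), so
  x and 1 - x are two roots that are distinct mod p: p splits. Since the roots of x(x - 1) + a
  modulo a prime power p^k lie in two residue classes, the p-part of the product of the values
  is at most p^(2 v_p(M!)) q^2 for split p and trivial otherwise; hence
  a^M \<le> (M!)^2 q^(2 N_q). With a > M^2/3 and ln M! \<le> (M + 1) ln M - M + 1 this gives the bound
  for M \<ge> 25; for smaller M it suffices that the odd number a and a + 2 have distinct prime
  factors, which both split.
\<close>

lemma ln_eq_sum_multiplicity:
  fixes n Q :: nat
  assumes "0 < n" "n \<le> Q"
  shows "ln (real n) = (\<Sum>p | prime p \<and> p \<le> Q. real (multiplicity p n) * ln (real p))"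
proof -
  have "real n = real (\<Prod>p\<in>prime_factors n. p ^ multiplicity p n)"
    using prime_factorization_nat[OF assms(1)] by simp
  also have "\<dots> = (\<Prod>p\<in>prime_factors n. real p ^ multiplicity p n)"
    by simp
  finally have factorization: "real n = (\<Prod>p\<in>prime_factors n. real p ^ multiplicity p n)" .
  have "ln (real n) = (\<Sum>p\<in>prime_factors n. ln (real p ^ multiplicity p n))"
    unfolding factorization by (subst ln_prod) (auto dest: in_prime_factors_imp_prime prime_gt_0_nat)
  also have "\<dots> = (\<Sum>p\<in>prime_factors n. real (multiplicity p n) * ln (real p))"
    by (simp add: ln_realpow prime_gt_0_nat)
  also have "\<dots> = (\<Sum>p | prime p \<and> p \<le> Q. real (multiplicity p n) * ln (real p))"
  proof (rule sum.mono_neutral_left)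
    show "prime_factors n \<subseteq> {p. prime p \<and> p \<le> Q}"
      using assms by (auto simp: in_prime_factors_iff intro: order.trans[OF dvd_imp_le])
  qed (auto simp: prime_factors_multiplicity)
  finally show ?thesis .
qed

lemma sum_ln_eq_sum_multiplicity:
  fixes f :: "'a \<Rightarrow> nat"
  assumes "finite X" "\<And>x. x \<in> X \<Longrightarrow> 0 < f x \<and> f x \<le> Q"
  shows "(\<Sum>x\<in>X. ln (real (f x))) =
           (\<Sum>p | prime p \<and> p \<le> Q. real (\<Sum>x\<in>X. multiplicity p (f x)) * ln (real p))"
proof -
  have "(\<Sum>x\<in>X. ln (real (f x))) =
          (\<Sum>x\<in>X. \<Sum>p | prime p \<and> p \<le> Q. real (multiplicity p (f x)) * ln (real p))"
    using assms(2) by (intro sum.cong refl ln_eq_sum_multiplicity) auto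
  also have "\<dots> = (\<Sum>p | prime p \<and> p \<le> Q. real (\<Sum>x\<in>X. multiplicity p (f x)) * ln (real p))"
    by (subst sum.swap) (simp add: sum_distrib_right)
  finally show ?thesis .
qed

lemma multiplicity_eq_card_prime_power_dvd:
  fixes p n B :: nat
  assumes "prime p" "0 < n" "n \<le> B"
  shows "multiplicity p n = card {k \<in> {1..B}. p ^ k dvd n}"
proof -
  have dvd_iff: "p ^ k dvd n \<longleftrightarrow> k \<le> multiplicity p n" for k
    using power_dvd_iff_le_multiplicity[of n p k] assms by (auto simp: prime_nat_iff)
  have "n < 2 ^ n" by (rule less_exp)
  also have "\<dots> \<le> p ^ n" using prime_ge_2_nat[OF assms(1)] by (rule power_mono) simp
  finally have "\<not> p ^ n dvd n" using assms(2) by (auto dest: dvd_imp_le)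
  then have "multiplicity p n < n" by (simp add: dvd_iff)
  then have "{k \<in> {1..B}. p ^ k dvd n} = {1..multiplicity p n}"
    using assms(3) by (auto simp: dvd_iff)
  then show ?thesis by simp
qed

lemma sum_card_filter_swap:
  assumes "finite A" "finite B"
  shows "(\<Sum>x\<in>A. card {y \<in> B. P x y}) = (\<Sum>y\<in>B. card {x \<in> A. P x y})"
proof -
  have card_filter: "card {z \<in> C. R z} = (\<Sum>z\<in>C. if R z then 1 else 0)" if "finite C" for C :: "'c set" and R
    using that by (simp add: sum.inter_filter[symmetric])
  show ?thesis
    using assms by (simp only: card_filter) (rule sum.swap)
qed

lemma sum_multiplicity_eq_sum_card_prime_power_dvd:
  fixes f :: "'a \<Rightarrow> nat"
  assumes "prime p" "finite X" "\<And>x. x \<in> X \<Longrightarrow> 0 < f x \<and> f x \<le> Q"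
  shows "(\<Sum>x\<in>X. multiplicity p (f x)) = (\<Sum>k = 1..Q. card {x \<in> X. p ^ k dvd f x})"
proof -
  have "(\<Sum>x\<in>X. multiplicity p (f x)) = (\<Sum>x\<in>X. card {k \<in> {1..Q}. p ^ k dvd f x})"
    using assms by (intro sum.cong refl multiplicity_eq_card_prime_power_dvd) auto
  also have "\<dots> = (\<Sum>k = 1..Q. card {x \<in> X. p ^ k dvd f x})"
    by (rule sum_card_filter_swap[OF assms(2) finite_atLeastAtMost])
  finally show ?thesis .
qed

lemma card_cong_class_le:
  fixes M m :: nat and r :: int
  assumes "0 < m"
  shows "card {y \<in> {1..M}. [int y = r] (mod int m)} \<le> M div m + 1"
proof -
  let ?A = "{y \<in> {1..M}. [int y = r] (mod int m)}"
  have "inj_on (\<lambda>y. y div m) ?A"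
  proof
    fix y y' assume "y \<in> ?A" "y' \<in> ?A" "y div m = y' div m"
    moreover from \<open>y \<in> ?A\<close> \<open>y' \<in> ?A\<close> have "y mod m = y' mod m"
      by (auto simp: cong_def simp flip: of_nat_mod)
    ultimately show "y = y'" by (metis div_mult_mod_eq)
  qed
  moreover have "(\<lambda>y. y div m) ` ?A \<subseteq> {0..M div m}"
    by (auto intro: div_le_mono)
  ultimately have "card ?A \<le> card {0..M div m}"
    by (intro card_inj_on_le) auto
  then show ?thesis by simp
qed

lemma div_le_card_multiples:
  fixes M m :: nat
  assumes "0 < m"
  shows "M div m \<le> card {y \<in> {1..M}. m dvd y}"
proof -
  have "(\<lambda>j. m * j) ` {1..M div m} \<subseteq> {y \<in> {1..M}. m dvd y}"
  proof
    fix y assume "y \<in> (\<lambda>j. m * j) ` {1..M div m}"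
    then obtain j where j: "1 \<le> j" "j \<le> M div m" "y = m * j" by auto
    then have "y \<le> m * (M div m)" by simp
    also have "\<dots> \<le> M" by simp
    finally show "y \<in> {y \<in> {1..M}. m dvd y}" using j assms by auto
  qed
  moreover have "inj_on (\<lambda>j. m * j) {1..M div m}" using assms by (auto simp: inj_on_def)
  ultimately show ?thesis using card_inj_on_le[of "\<lambda>j. m * j" "{1..M div m}"] by simp
qed

lemma card_prime_powers_below_mult_ln_le:
  fixes p Q :: nat
  assumes "prime p"
  shows "real (card {k \<in> {1..Q}. p ^ k < Q}) * ln (real p) \<le> ln (real Q)"
proof (cases "{k \<in> {1..Q}. p ^ k < Q} = {}")
  case True
  then show ?thesis by (simp only: True card.empty) (cases "Q = 0", auto)
next
  case False
  define K where "K = {k \<in> {1..Q}. p ^ k < Q}"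
  define k0 where "k0 = Max K"
  have "k0 \<in> K" unfolding k0_def K_def using False by (intro Max_in) auto
  have "K \<subseteq> {1..k0}" unfolding k0_def K_def by (auto intro: Max_ge)
  then have "real (card K) * ln (real p) \<le> real k0 * ln (real p)"
    using prime_ge_1_nat[OF assms] card_mono[of "{1..k0}" K] by (intro mult_right_mono) auto
  also have "\<dots> = ln (real p ^ k0)" by (simp add: ln_realpow)
  also have "\<dots> \<le> ln (real Q)"
    using \<open>k0 \<in> K\<close> assms unfolding K_def
    by (subst ln_le_cancel_iff) (auto simp: prime_gt_0_nat simp flip: of_nat_power)
  finally show ?thesis unfolding K_def .
qed

lemma sum_ln_upto_le:
  fixes M :: nat
  assumes "1 \<le> M"
  shows "(\<Sum>x = 1..M. ln (real x)) \<le> (real M + 1) * ln (real M) - real M + 1"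
  using assms
proof (induction M rule: dec_induct)
  case base
  then show ?case by simp
next
  case (step n)
  have "ln (real n / (real n + 1)) \<le> real n / (real n + 1) - 1"
    using step.hyps by (intro ln_le_minus_one) auto
  then have "1 \<le> (real n + 1) * (ln (real n + 1) - ln (real n))"
    using step.hyps by (simp add: ln_div field_simps)
  with step.IH show ?case by (simp add: algebra_simps)
qed

lemma of_nat_quadratic_value: "int (x * (x - 1) + a) = int x * (int x - 1) + int a"
  by (cases x) (auto simp: algebra_simps)

lemma le_quadratic_value: "0 < a \<Longrightarrow> x \<le> x * (x - 1) + a"
  for a x :: nat
  by (cases x) auto

lemma not_dvd_double_minus_one_if_dvd_quadratic_value:
  fixes p a x :: nat
  assumes "prime p" "\<not> p dvd 4 * a - 1" "p dvd x * (x - 1) + a"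
  shows "\<not> int p dvd 2 * int x - 1"
proof
  assume dvd_linear: "int p dvd 2 * int x - 1"
  have "0 < a" using assms(2) by (cases "a = 0") auto
  then have "int (4 * a - 1) = 4 * int (x * (x - 1) + a) - (2 * int x - 1)^2"
    by (simp only: of_nat_quadratic_value) (simp add: of_nat_diff power2_eq_square algebra_simps)
  also have "int p dvd \<dots>"
  proof (rule dvd_diff)
    show "int p dvd 4 * int (x * (x - 1) + a)"
      using assms(3) by (simp only: int_dvd_int_iff dvd_mult)
    show "int p dvd (2 * int x - 1)^2"
      using dvd_linear by (simp add: power2_eq_square)
  qed
  finally show False using assms(2) by (simp only: int_dvd_int_iff)
qed

lemma quadratic_roots_mod_prime_power:
  fixes p k a x y :: nat
  assumes "prime p" "\<not> p dvd 4 * a - 1" "0 < k"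
    and "p ^ k dvd x * (x - 1) + a" "p ^ k dvd y * (y - 1) + a"
  shows "[int y = int x] (mod int (p ^ k)) \<or> [int y = 1 - int x] (mod int (p ^ k))"
proof -
  have "int (p ^ k) dvd int (y * (y - 1) + a) - int (x * (x - 1) + a)"
    using assms(4,5) by (intro dvd_diff) (simp_all only: int_dvd_int_iff)
  also have "int (y * (y - 1) + a) - int (x * (x - 1) + a) = (int y - int x) * (int y + int x - 1)"
    by (simp only: of_nat_quadratic_value) (simp add: algebra_simps)
  finally have dvd_product: "int p ^ k dvd (int y - int x) * (int y + int x - 1)" by simp
  have "\<not> int p dvd 2 * int y - 1"
    using assms by (intro not_dvd_double_minus_one_if_dvd_quadratic_value)
      (auto intro: dvd_trans[OF dvd_power])
  moreover have "2 * int y - 1 = (int y - int x) + (int y + int x - 1)" by simp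
  ultimately have not_both: "\<not> (int p dvd int y - int x \<and> int p dvd int y + int x - 1)"
    by (metis dvd_add)
  have "prime_elem (int p)" using assms(1) by simp
  have "int p ^ k dvd int y - int x \<or> int p ^ k dvd int y - (1 - int x)"
  proof (cases "int p dvd int y - int x")
    case True
    then have "\<not> int p dvd int y + int x - 1" using not_both by blast
    moreover have "int p ^ k dvd (int y + int x - 1) * (int y - int x)"
      using dvd_product by (simp only: mult.commute)
    ultimately show ?thesis
      using prime_power_dvd_multD[OF \<open>prime_elem (int p)\<close> _ \<open>0 < k\<close>] by blast
  next
    case False
    have "int p ^ k dvd int y + int x - 1"
      using prime_power_dvd_multD[OF \<open>prime_elem (int p)\<close> dvd_product \<open>0 < k\<close> False] .
    moreover have "int y + int x - 1 = int y - (1 - int x)" by simp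
    ultimately show ?thesis by argo
  qed
  then show ?thesis by (simp add: cong_iff_dvd_diff)
qed

lemma card_quadratic_roots_mod_prime_power_le:
  fixes p k a M :: nat
  assumes "prime p" "\<not> p dvd 4 * a - 1"
  shows "card {x \<in> {1..M}. p ^ k dvd x * (x - 1) + a} \<le> 2 * card {x \<in> {1..M}. p ^ k dvd x} + 2"
proof -
  let ?S = "{x \<in> {1..M}. p ^ k dvd x * (x - 1) + a}"
  consider "k = 0" | "?S = {}" | x0 where "0 < k" "x0 \<in> ?S" by blast
  then show ?thesis
  proof cases
    case 1
    then show ?thesis by simp
  next
    case 2
    then show ?thesis by (simp only: card.empty)
  next
    case 3
    have pk: "0 < p ^ k" using assms(1) by (simp add: prime_gt_0_nat)
    let ?A = "{y \<in> {1..M}. [int y = int x0] (mod int (p ^ k))}"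
    let ?B = "{y \<in> {1..M}. [int y = 1 - int x0] (mod int (p ^ k))}"
    have "?S \<subseteq> ?A \<union> ?B"
      using 3 quadratic_roots_mod_prime_power[OF assms \<open>0 < k\<close>, of x0] by auto
    then have "card ?S \<le> card (?A \<union> ?B)" by (intro card_mono) auto
    also have "\<dots> \<le> card ?A + card ?B" by (rule card_Un_le)
    also have "\<dots> \<le> 2 * (M div p ^ k + 1)"
      using card_cong_class_le[OF pk, of M "int x0"] card_cong_class_le[OF pk, of M "1 - int x0"]
      by simp
    also have "\<dots> \<le> 2 * card {x \<in> {1..M}. p ^ k dvd x} + 2"
      using div_le_card_multiples[OF pk, of M] by simp
    finally show ?thesis .
  qed
qed

lemma card_quadratic_roots_mod_prime_power_below_le:
  fixes p k a M Q :: nat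
  assumes "prime p" "\<not> p dvd 4 * a - 1" and values_below: "\<And>x. x \<in> {1..M} \<Longrightarrow> x * (x - 1) + a < Q"
  shows "card {x \<in> {1..M}. p ^ k dvd x * (x - 1) + a}
           \<le> 2 * card {x \<in> {1..M}. p ^ k dvd x} + (if p ^ k < Q then 2 else 0)"
proof (cases "p ^ k < Q")
  case True
  then show ?thesis using card_quadratic_roots_mod_prime_power_le[OF assms(1,2)] by simp
next
  case False
  have "0 < a" using assms(2) by (cases "a = 0") auto
  then have value_pos: "0 < x * (x - 1) + a" for x by simp
  have "{x \<in> {1..M}. p ^ k dvd x * (x - 1) + a} = {}"
  proof (intro equals0I, elim CollectE conjE)
    fix x assume "x \<in> {1..M}" and "p ^ k dvd x * (x - 1) + a"
    then have "p ^ k \<le> x * (x - 1) + a" using value_pos by (intro dvd_imp_le)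
    then show False using False values_below[OF \<open>x \<in> {1..M}\<close>] by simp
  qed
  then show ?thesis by (simp only: card.empty zero_le)
qed

lemma sum_multiplicity_quadratic_values_le:
  fixes p a M Q :: nat
  assumes "prime p" "\<not> p dvd 4 * a - 1" and values_below: "\<And>x. x \<in> {1..M} \<Longrightarrow> x * (x - 1) + a < Q"
  shows "(\<Sum>x = 1..M. multiplicity p (x * (x - 1) + a))
           \<le> 2 * (\<Sum>x = 1..M. multiplicity p x) + 2 * card {k \<in> {1..Q}. p ^ k < Q}"
proof -
  have "0 < a" using assms(2) by (cases "a = 0") auto
  have value_bounds: "0 < x * (x - 1) + a \<and> x * (x - 1) + a \<le> Q" and arg_bounds: "0 < x \<and> x \<le> Q"
    if "x \<in> {1..M}" for x
    using values_below[OF that] le_quadratic_value[OF \<open>0 < a\<close>, of x] that by auto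
  have "(\<Sum>x = 1..M. multiplicity p (x * (x - 1) + a))
          = (\<Sum>k = 1..Q. card {x \<in> {1..M}. p ^ k dvd x * (x - 1) + a})"
    using value_bounds by (intro sum_multiplicity_eq_sum_card_prime_power_dvd assms(1)) auto
  also have "\<dots> \<le> (\<Sum>k = 1..Q. 2 * card {x \<in> {1..M}. p ^ k dvd x} + (if p ^ k < Q then 2 else 0))"
    using assms by (intro sum_mono card_quadratic_roots_mod_prime_power_below_le)
  also have "\<dots> = 2 * (\<Sum>k = 1..Q. card {x \<in> {1..M}. p ^ k dvd x}) + 2 * card {k \<in> {1..Q}. p ^ k < Q}"
  proof -
    have "(\<Sum>k = 1..Q. if p ^ k < Q then 2 else 0) = 2 * card {k \<in> {1..Q}. p ^ k < Q}"
      using sum.inter_filter[of "{1..Q}" "\<lambda>_. 2 :: nat" "\<lambda>k. p ^ k < Q"] by simp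
    then show ?thesis by (simp only: sum.distrib sum_distrib_left)
  qed
  also have "(\<Sum>k = 1..Q. card {x \<in> {1..M}. p ^ k dvd x}) = (\<Sum>x = 1..M. multiplicity p x)"
    using arg_bounds
    by (intro sum_multiplicity_eq_sum_card_prime_power_dvd[where f = "\<lambda>x. x", symmetric] assms(1)) auto
  finally show ?thesis .
qed

lemma mult_ln_sum_multiplicity_quadratic_values_le:
  fixes a M p :: nat
  assumes "prime (4 * a - 1)" "prime p"
    and values_below: "\<And>x. x \<in> {1..M} \<Longrightarrow> x * (x - 1) + a < 4 * a - 1"
  shows "real (\<Sum>x = 1..M. multiplicity p (x * (x - 1) + a)) * ln (real p)
           \<le> 2 * (real (\<Sum>x = 1..M. multiplicity p x) * ln (real p))
             + (if \<exists>x\<in>{1..M}. p dvd x * (x - 1) + a then 2 * ln (real (4 * a - 1)) else 0)"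
proof (cases "\<exists>x\<in>{1..M}. p dvd x * (x - 1) + a")
  case True
  then obtain x where "x \<in> {1..M}" "p dvd x * (x - 1) + a" by blast
  moreover have "0 < a" using assms(1) by (cases "a = 0") auto
  ultimately have "p \<le> x * (x - 1) + a" by (intro dvd_imp_le) auto
  then have "p < 4 * a - 1" using values_below[OF \<open>x \<in> {1..M}\<close>] by linarith
  then have not_dvd: "\<not> p dvd 4 * a - 1" using primes_dvd_imp_eq[OF assms(2,1)] by auto
  define A where "A = (\<Sum>x = 1..M. multiplicity p (x * (x - 1) + a))"
  define B where "B = (\<Sum>x = 1..M. multiplicity p x)"
  define C where "C = card {k \<in> {1..4 * a - 1}. p ^ k < 4 * a - 1}"
  have "A \<le> 2 * B + 2 * C"
    unfolding A_def B_def C_def by (rule sum_multiplicity_quadratic_values_le[OF assms(2) not_dvd values_below])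
  then have "real A \<le> real (2 * B + 2 * C)" by (rule of_nat_mono)
  then have "real A * ln (real p) \<le> (2 * real B + 2 * real C) * ln (real p)"
    using prime_ge_1_nat[OF assms(2)] by (intro mult_right_mono) auto
  also have "\<dots> \<le> 2 * (real B * ln (real p)) + 2 * ln (real (4 * a - 1))"
    using card_prime_powers_below_mult_ln_le[OF assms(2), of "4 * a - 1", folded C_def]
    by (simp add: algebra_simps)
  finally show ?thesis using True unfolding A_def B_def by (simp only: if_True)
next
  case False
  then have "(\<Sum>x = 1..M. multiplicity p (x * (x - 1) + a)) = 0"
    by (auto intro!: sum.neutral not_dvd_imp_multiplicity_0)
  moreover have "0 \<le> ln (real p)" using prime_ge_1_nat[OF assms(2)] by simp
  ultimately show ?thesis using False by (simp add: sum_nonneg)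
qed

lemma sum_ln_quadratic_values_le:
  fixes a M :: nat
  assumes "prime (4 * a - 1)" and values_below: "\<And>x. x \<in> {1..M} \<Longrightarrow> x * (x - 1) + a < 4 * a - 1"
  shows "(\<Sum>x = 1..M. ln (real (x * (x - 1) + a)))
           \<le> 2 * (\<Sum>x = 1..M. ln (real x))
             + 2 * ln (real (4 * a - 1)) * real (card {p. prime p \<and> (\<exists>x\<in>{1..M}. p dvd x * (x - 1) + a)})"
proof -
  define Q where "Q = 4 * a - 1"
  define P where "P = {p. prime p \<and> (\<exists>x\<in>{1..M}. p dvd x * (x - 1) + a)}"
  have "0 < a" using assms(1) by (cases "a = 0") auto
  have value_bounds: "0 < x * (x - 1) + a \<and> x * (x - 1) + a \<le> Q" and arg_bounds: "0 < x \<and> x \<le> Q"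
    if "x \<in> {1..M}" for x
    using values_below[OF that] le_quadratic_value[OF \<open>0 < a\<close>, of x] that unfolding Q_def by auto
  have "P \<subseteq> {p. prime p \<and> p \<le> Q}"
  proof
    fix p assume "p \<in> P"
    then obtain x where "prime p" "x \<in> {1..M}" "p dvd x * (x - 1) + a" unfolding P_def by blast
    then show "p \<in> {p. prime p \<and> p \<le> Q}" using value_bounds[of x] by (auto dest: dvd_imp_le)
  qed
  have "(\<Sum>x = 1..M. ln (real (x * (x - 1) + a)))
          = (\<Sum>p | prime p \<and> p \<le> Q. real (\<Sum>x = 1..M. multiplicity p (x * (x - 1) + a)) * ln (real p))"
    using value_bounds by (intro sum_ln_eq_sum_multiplicity) auto
  also have "\<dots> \<le> (\<Sum>p | prime p \<and> p \<le> Q.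
                   2 * (real (\<Sum>x = 1..M. multiplicity p x) * ln (real p)) + (if p \<in> P then 2 * ln (real Q) else 0))"
  proof (rule sum_mono)
    fix p assume "p \<in> {p. prime p \<and> p \<le> Q}"
    then have "p \<in> P \<longleftrightarrow> (\<exists>x\<in>{1..M}. p dvd x * (x - 1) + a)" unfolding P_def by simp
    then show "real (\<Sum>x = 1..M. multiplicity p (x * (x - 1) + a)) * ln (real p)
                 \<le> 2 * (real (\<Sum>x = 1..M. multiplicity p x) * ln (real p)) + (if p \<in> P then 2 * ln (real Q) else 0)"
      using mult_ln_sum_multiplicity_quadratic_values_le[OF assms(1) _ values_below, of p] \<open>p \<in> _\<close>
      unfolding Q_def by simp
  qed
  also have "\<dots> = 2 * (\<Sum>p | prime p \<and> p \<le> Q. real (\<Sum>x = 1..M. multiplicity p x) * ln (real p))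
                   + 2 * ln (real Q) * real (card P)"
    using \<open>P \<subseteq> _\<close> by (simp add: sum.distrib sum_distrib_left sum.inter_restrict[symmetric] Int_absorb1)
  also have "(\<Sum>p | prime p \<and> p \<le> Q. real (\<Sum>x = 1..M. multiplicity p x) * ln (real p)) = (\<Sum>x = 1..M. ln (real x))"
    using arg_bounds by (intro sum_ln_eq_sum_multiplicity[where f = "\<lambda>x. x", symmetric]) auto
  finally show ?thesis unfolding P_def Q_def .
qed

lemma mult_ln_le_via_prime_divisors:
  fixes a M :: nat
  assumes "prime (4 * a - 1)" "1 \<le> M" and values_below: "\<And>x. x \<in> {1..M} \<Longrightarrow> x * (x - 1) + a < 4 * a - 1"
  shows "real M * ln (real a)
           \<le> 2 * ((real M + 1) * ln (real M) - real M + 1)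
             + 2 * real (card {p. prime p \<and> (\<exists>x\<in>{1..M}. p dvd x * (x - 1) + a)}) * ln (real (4 * a - 1))"
proof -
  have "0 < a" using assms(1) by (cases "a = 0") auto
  have "real M * ln (real a) = (\<Sum>x = 1..M. ln (real a))" by simp
  also have "\<dots> \<le> (\<Sum>x = 1..M. ln (real (x * (x - 1) + a)))"
    using \<open>0 < a\<close> by (intro sum_mono ln_mono) (simp_all only: of_nat_0_less_iff of_nat_le_iff le_add2)
  also have "\<dots> \<le> 2 * (\<Sum>x = 1..M. ln (real x))
             + 2 * ln (real (4 * a - 1)) * real (card {p. prime p \<and> (\<exists>x\<in>{1..M}. p dvd x * (x - 1) + a)})"
    using assms(1) values_below by (rule sum_ln_quadratic_values_le)
  also have "\<dots> \<le> 2 * ((real M + 1) * ln (real M) - real M + 1)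
             + 2 * real (card {p. prime p \<and> (\<exists>x\<in>{1..M}. p dvd x * (x - 1) + a)}) * ln (real (4 * a - 1))"
    using sum_ln_upto_le[OF assms(2)] by simp
  finally show ?thesis .
qed

lemma omega_minpoly_minus:
  fixes q a :: nat
  assumes "4 * a = q + 1"
  shows "omega_minpoly (- int q) y = y^2 - y + int a"
proof -
  have "(- int q) mod 4 = 1" and "(1 - (- int q)) div 4 = int a" using assms by presburger+
  then show ?thesis by (simp add: omega_minpoly_def)
qed

lemma splits_if_dvd_quadratic_value:
  fixes q a p x :: nat
  assumes "prime q" "4 * a = q + 1" "prime p" "p < q" "p dvd x * (x - 1) + a"
  shows "splits_in_quadratic_field (- int q) p"
proof -
  have "\<not> p dvd 4 * a - 1" using assms primes_dvd_imp_eq[OF assms(3,1)] by auto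
  then have "\<not> int p dvd 2 * int x - 1"
    using assms(3,5) by (intro not_dvd_double_minus_one_if_dvd_quadratic_value)
  then have "\<not> [int x = 1 - int x] (mod int p)"
    by (simp add: cong_iff_dvd_diff algebra_simps)
  moreover have "omega_minpoly (- int q) (int x) = int (x * (x - 1) + a)"
    and "omega_minpoly (- int q) (1 - int x) = int (x * (x - 1) + a)"
    unfolding omega_minpoly_minus[OF assms(2)] of_nat_quadratic_value
    by (simp_all add: power2_eq_square algebra_simps)
  moreover have "[int (x * (x - 1) + a) = 0] (mod int p)"
    using assms(5) by (simp only: cong_0_iff int_dvd_int_iff)
  ultimately show ?thesis
    unfolding splits_in_quadratic_field_def using assms(3) by metis
qed

lemma card_prime_divisors_quadratic_values_le_N:
  fixes q a M :: nat
  assumes "prime q" "4 * a = q + 1" and values_below: "\<And>x. x \<in> {1..M} \<Longrightarrow> x * (x - 1) + a < q"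
  shows "card {p. prime p \<and> (\<exists>x\<in>{1..M}. p dvd x * (x - 1) + a)} \<le> N q"
proof -
  have "{p. prime p \<and> (\<exists>x\<in>{1..M}. p dvd x * (x - 1) + a)}
          \<subseteq> {p. prime p \<and> p \<le> q \<and> splits_in_quadratic_field (- int q) p}"
  proof (intro subsetI CollectI)
    fix p assume "p \<in> {p. prime p \<and> (\<exists>x\<in>{1..M}. p dvd x * (x - 1) + a)}"
    then obtain x where "prime p" "x \<in> {1..M}" "p dvd x * (x - 1) + a" by blast
    moreover have "0 < a" using assms(2) by simp
    ultimately have "p \<le> x * (x - 1) + a" by (intro dvd_imp_le) auto
    then have "p < q" using values_below[OF \<open>x \<in> {1..M}\<close>] by simp
    then show "prime p \<and> p \<le> q \<and> splits_in_quadratic_field (- int q) p"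
      using splits_if_dvd_quadratic_value[OF assms(1,2) \<open>prime p\<close> _ \<open>p dvd _\<close>] \<open>prime p\<close> by simp
  qed
  then show ?thesis unfolding N_def by (intro card_mono) auto
qed

lemma two_le_card_prime_divisors_quadratic_values:
  fixes a M :: nat
  assumes "odd a" "1 < a" "2 \<le> M"
  shows "2 \<le> card {p. prime p \<and> (\<exists>x\<in>{1..M}. p dvd x * (x - 1) + a)}"
proof -
  let ?P = "{p. prime p \<and> (\<exists>x\<in>{1..M}. p dvd x * (x - 1) + a)}"
  obtain p1 where "prime p1" "p1 dvd a" using prime_factor_nat[of a] assms(2) by auto
  obtain p2 where "prime p2" "p2 dvd a + 2" using prime_factor_nat[of "a + 2"] by auto
  have "p1 \<noteq> p2"
  proof
    assume "p1 = p2"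
    then have "p1 dvd 2" using \<open>p1 dvd a\<close> \<open>p2 dvd a + 2\<close> dvd_add_right_iff by metis
    then have "p1 = 2" using primes_dvd_imp_eq[OF \<open>prime p1\<close> two_is_prime_nat] by simp
    then show False using \<open>p1 dvd a\<close> \<open>odd a\<close> by simp
  qed
  have "p1 \<in> ?P" using \<open>prime p1\<close> \<open>p1 dvd a\<close> assms(3) by (auto intro!: bexI[of _ 1])
  moreover have "p2 \<in> ?P" using \<open>prime p2\<close> \<open>p2 dvd a + 2\<close> assms(3) by (auto intro!: bexI[of _ 2])
  ultimately have "{p1, p2} \<subseteq> ?P" by simp
  moreover have "?P \<subseteq> {..M * M + a}"
  proof
    fix p assume "p \<in> ?P"
    then obtain x where "x \<in> {1..M}" "p dvd x * (x - 1) + a" by auto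
    then have "p \<le> x * (x - 1) + a" using assms(2) by (intro dvd_imp_le) auto
    also have "\<dots> \<le> M * M + a" using \<open>x \<in> {1..M}\<close> by (intro add_right_mono mult_le_mono) auto
    finally show "p \<in> {..M * M + a}" by simp
  qed
  ultimately have "card {p1, p2} \<le> card ?P" by (intro card_mono) (auto intro: finite_subset)
  then show ?thesis using \<open>p1 \<noteq> p2\<close> by simp
qed

lemma quadratic_values_below:
  fixes q a M x :: nat
  assumes "4 * a = q + 1" "4 * M^2 \<le> 3 * q" "x \<in> {1..M}"
  shows "x * (x - 1) + a < q"
proof -
  have "x * (x - 1) \<le> M * (M - 1)" using assms(3) by (intro mult_le_mono) auto
  moreover have "M * (M - 1) + M = M^2" using assms(3) by (cases M) (auto simp: power2_eq_square)
  moreover have "1 \<le> M" using assms(3) by simp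
  ultimately show ?thesis using assms(1,2) by linarith
qed

lemma ln_3_gt_1: "1 < ln (3 :: real)"
proof -
  have "exp 1 < (3 :: real)" using e_less_272 by simp
  then have "ln (exp 1) < ln (3 :: real)" by (subst ln_less_cancel_iff) auto
  then show ?thesis by simp
qed

lemma ln_3_sqrt_2: "ln (3 * sqrt 2) = ln 3 + ln 2 / (2 :: real)"
  by (simp add: ln_mult ln_sqrt)

lemma four_ln_add_four_le_mult_ln_2:
  fixes m :: real
  assumes "25 \<le> m"
  shows "4 * ln m + 4 \<le> m * ln 2"
proof -
  have "ln (m / 32) \<le> m / 32 - 1" using assms by (intro ln_le_minus_one) auto
  moreover have "ln (m / 32) = ln m - 5 * ln 2"
    using assms ln_realpow[of 2 5] by (simp add: ln_div)
  moreover have "(m - 20) * (2 / 3) \<le> (m - 20) * ln 2"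
    using ln2_ge_two_thirds assms by (intro mult_left_mono) auto
  then have "2 / 3 * m - 40 / 3 \<le> m * ln 2 - 20 * ln 2" by (simp add: algebra_simps)
  ultimately show ?thesis using assms by linarith
qed

lemma four_lt_ln:
  fixes x :: real
  assumes "64 < x"
  shows "4 < ln x"
proof -
  have "4 \<le> 6 * ln (2 :: real)" using ln2_ge_two_thirds by simp
  also have "\<dots> = ln 64" using ln_realpow[of 2 6] by simp
  also have "\<dots> < ln x" using assms by simp
  finally show ?thesis .
qed

lemma main_inequality_large:
  fixes m a n L :: real
  assumes "25 \<le> m" "m^2 < 3 * a" and product_bound: "m * ln a \<le> 2 * ((m + 1) * ln m - m + 1) + 2 * n * L"
  shows "(2 - ln (3 * sqrt 2)) * m < 2 * n * L"
proof -
  have "2 * ln m - ln 3 = ln (m^2 / 3)" using assms(1) by (simp add: ln_div ln_realpow)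
  also have "\<dots> < ln a"
  proof (subst ln_less_cancel_iff)
    show "0 < a" using assms(1,2) zero_le_power2[of m] by linarith
  qed (use assms(1,2) in auto)
  finally have "m * (2 * ln m - ln 3) < m * ln a" using assms(1) by simp
  moreover have "m * (2 * ln m - ln 3) = 2 * (m * ln m) - m * ln 3"
    and "2 * ((m + 1) * ln m - m + 1) = 2 * (m * ln m) + 2 * ln m - 2 * m + 2"
    by (simp_all add: algebra_simps)
  ultimately have "2 * m - m * ln 3 - 2 * ln m - 2 < 2 * n * L"
    using product_bound by linarith
  moreover have "(2 - ln (3 * sqrt 2)) * m = 2 * m - m * ln 3 - m * ln 2 / 2"
    by (simp add: ln_3_sqrt_2 algebra_simps)
  ultimately show ?thesis using four_ln_add_four_le_mult_ln_2[OF assms(1)] by linarith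
qed

lemma main_inequality_small:
  fixes m n L :: real
  assumes "0 \<le> m" "m \<le> 24" "2 \<le> n" "4 < L"
  shows "(2 - ln (3 * sqrt 2)) * m < 2 * n * L"
proof -
  have "2 - ln (3 * sqrt 2) < (2 / 3 :: real)"
    using ln_3_gt_1 ln2_ge_two_thirds by (simp add: ln_3_sqrt_2)
  then have "(2 - ln (3 * sqrt 2)) * m \<le> 2 / 3 * m" using assms(1) by (intro mult_right_mono) auto
  also have "\<dots> < 2 * 2 * L" using assms by linarith
  also have "\<dots> \<le> 2 * n * L" using assms by (intro mult_right_mono) auto
  finally show ?thesis .
qed

lemma card_prime_divisors_quadratic_values_lower_bound:
  fixes q a M :: nat
  assumes "prime q" "67 \<le> q" "4 * a = q + 1" "odd a" "2 \<le> M" "4 * M^2 \<le> 3 * q"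
  shows "(2 - ln (3 * sqrt 2)) * real M
           < 2 * real (card {p. prime p \<and> (\<exists>x\<in>{1..M}. p dvd x * (x - 1) + a)}) * ln (real q)"
proof (cases "25 \<le> M")
  case True
  have "real M ^ 2 < 3 * real a"
  proof -
    have "M ^ 2 < 3 * a" using assms(3,6) by linarith
    then show ?thesis by (metis of_nat_less_iff of_nat_mult of_nat_numeral of_nat_power)
  qed
  moreover have "4 * a - 1 = q" using assms(3) by simp
  ultimately show ?thesis
    using mult_ln_le_via_prime_divisors[of a M] quadratic_values_below[OF assms(3,6)] assms(1) True
    by (intro main_inequality_large) auto
next
  case False
  have "2 \<le> card {p. prime p \<and> (\<exists>x\<in>{1..M}. p dvd x * (x - 1) + a)}"
    using assms(2,3) by (intro two_le_card_prime_divisors_quadratic_values assms(4,5)) simp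
  moreover have "4 < ln (real q)" using assms(2) by (intro four_lt_ln) simp
  ultimately show ?thesis using False by (intro main_inequality_small) auto
qed

theorem theorem1p2:
  fixes q :: nat
  assumes "prime q" and "q \<ge> 67" and "q mod 16 = 3"
  shows "real (N q) > (2 - ln (3 * sqrt 2)) / 2 * (real_of_int \<lfloor>sqrt (3 * real q / 4)\<rfloor> / ln (real q))"
proof -
  define a where "a = (q + 1) div 4"
  define M where "M = nat \<lfloor>sqrt (3 * real q / 4)\<rfloor>"
  define P where "P = {p. prime p \<and> (\<exists>x\<in>{1..M}. p dvd x * (x - 1) + a)}"
  have a: "4 * a = q + 1" "odd a" using assms(3) unfolding a_def by presburger+
  have floor_eq: "real_of_int \<lfloor>sqrt (3 * real q / 4)\<rfloor> = real M" unfolding M_def by simp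
  have "2 \<le> M" using assms(2) unfolding M_def by (intro le_nat_floor real_le_rsqrt) simp
  have M_le: "real M \<le> sqrt (3 * real q / 4)" using floor_eq of_int_floor_le by metis
  have "real (4 * M^2) \<le> real (3 * q)" using power_mono[OF M_le of_nat_0_le_iff, of 2] by simp
  then have M_sq: "4 * M^2 \<le> 3 * q" by (simp only: of_nat_le_iff)
  have "0 < ln (real q)" using assms(2) by simp
  have "(2 - ln (3 * sqrt 2)) / 2 * (real M / ln (real q)) < real (card P)"
    using card_prime_divisors_quadratic_values_lower_bound[OF assms(1,2) a \<open>2 \<le> M\<close> M_sq] \<open>0 < ln (real q)\<close>
    unfolding P_def by (simp add: field_simps)
  also have "card P \<le> N q"
    unfolding P_def using assms(1) a(1) quadratic_values_below[OF a(1) M_sq]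
    by (rule card_prime_divisors_quadratic_values_le_N)
  finally show ?thesis unfolding floor_eq by simp
qed

end
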